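(* Let $n\in\mathbb{N}$ and $n-1<\beta<n$, and let $X=\mathsf{X}_\beta$ with alphabet $\mathcal{A}_\beta$. Define $\varphi\colon\mathcal{A}_\beta\to\{0,1\}^*$ by $\varphi(j)=1^j0$, extend it to words by concatenation, and let $X'$ be the shift space whose language consists of all subwords of words $\varphi(w)$, $w\in\mathcal{B}(X)$. Define $\varphi\colon X^+\to X'^+$ by $\varphi(x_1x_2\cdots)=\varphi(x_1)\varphi(x_2)\cdots$. Then $\varphi\colon X^+\to X'^+$ is surjective and order preserving with respect to the lexicographic order.
   Context: For $\beta>1$, let $e(\beta)=x_1x_2\cdots$ be the $\beta$-expansion of $1$ ($x_1=\lfloor\beta\rfloor$, $r_1=\{\beta\}$, $x_n=\lfloor\beta r_{n-1}\rfloor$, $r_n=\{\beta r_{n-1}\}$). The generating sequence is $g(\beta)=e(\beta)$ if $e(\beta)$ has infinitely many nonzero terms, and $g(\beta)=(a_1\cdots a_{k-1}(a_k-1))^\infty$ if $e(\beta)=a_1\cdots a_k00\cdots$ with $a_k\neq0$. The beta-shift $\mathsf{X}_\beta$ is the two-sided shift space whose language $\mathcal{B}(\mathsf{X}_\beta)$ is the set of words $x_n(t)\cdots x_m(t)$ occurring in $\beta$-expansions of $t\in[0,1]$; for non-integer $\beta$ its alphabet is $\mathcal{A}_\beta=\{0,\ldots,\lfloor\beta\rfloor\}$. A one-sided sequence $y_1y_2\cdots$ is a right-ray of $\mathsf{X}_\beta$ iff $y_ky_{k+1}\cdots\le g(\beta)$ lexicographically for all $k$. For a shift space $Y$, $Y^+=\{y_0y_1y_2\cdots\mid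 y\in Y\}$ is its set of right-rays, ordered lexicographically. *)

theory Defs
  imports Complex_Main
begin

fun beta_rem :: "real \<Rightarrow> real \<Rightarrow> nat \<Rightarrow> real" where
  "beta_rem \<beta> t 0 = t"
| "beta_rem \<beta> t (Suc k) = frac (\<beta> * beta_rem \<beta> t k)"

text \<open>Digit x_(k+1)(t) = floor(beta r_k(t)); index k here corresponds to x_(k+1).\<close>
definition beta_digit :: "real \<Rightarrow> real \<Rightarrow> nat \<Rightarrow> nat" where
  "beta_digit \<beta> t k = nat \<lfloor>\<beta> * beta_rem \<beta> t k\<rfloor>"

definition beta_lang :: "real \<Rightarrow> nat list set" where
  "beta_lang \<beta> = {map (beta_digit \<beta> t) [i..<j] | t i j. 0 \<le> t \<and> t \<le> 1 \<and> i < j}"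

definition shift_of_lang :: "nat list set \<Rightarrow> (int \<Rightarrow> nat) set" where
  "shift_of_lang L = {y. \<forall>i j. i \<le> j \<longrightarrow> map y [i..j] \<in> L}"

definition right_rays :: "(int \<Rightarrow> nat) set \<Rightarrow> (nat \<Rightarrow> nat) set" where
  "right_rays Y = {(\<lambda>k. y (int k)) | y. y \<in> Y}"

definition beta_shift :: "real \<Rightarrow> (int \<Rightarrow> nat) set" where
  "beta_shift \<beta> = shift_of_lang (beta_lang \<beta>)"

definition phi_sym :: "nat \<Rightarrow> nat list" where
  "phi_sym j = replicate j 1 @ [0]"

definition phi_word :: "nat list \<Rightarrow> nat list" where
  "phi_word w = concat (map phi_sym w)"

definition phi_lang :: "nat list set \<Rightarrow> nat list set" where
  "phi_lang L = {v. \<exists>w \<in> L. \<exists>p s. phi_word w = p @ v @ s}"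

text \<open>phi on one-sided sequences: phi(x_0 x_1 ...) = phi(x_0) phi(x_1) ...\<close>
function phi_seq :: "(nat \<Rightarrow> nat) \<Rightarrow> nat \<Rightarrow> nat" where
  "phi_seq x p = (if p < x 0 then 1 else if p = x 0 then 0
                  else phi_seq (\<lambda>k. x (Suc k)) (p - Suc (x 0)))"
  by auto
termination by (relation "measure snd") auto

definition lex_le :: "(nat \<Rightarrow> nat) \<Rightarrow> (nat \<Rightarrow> nat) \<Rightarrow> bool" where
  "lex_le x y \<longleftrightarrow> x = y \<or> (\<exists>k. (\<forall>i<k. x i = y i) \<and> x k < y k)"

end

theory Submission
  imports Defs "HOL-Library.Omega_Words_Fun"
begin

text \<open>
  The substitution codes a digit j as a block of j ones followed by a zero, so it is order
  preserving: at the first position k where x and y differ, x k < y k, the image of x shows its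
  zero where the image of y still shows a one. A right-ray of the beta-shift is a sequence all of
  whose prefixes begin beta-expansions of numbers in [0,1); such prefixes may be padded on the left
  by zeros, which yields two-sided witnesses for the ray and for its image.

  Conversely, a right-ray y of X' is a 0-1 sequence. All digits of an expansion of a number in
  [0,1] are below n, so y contains no run of n ones, hence infinitely many zeros, and reading off
  the lengths of its blocks gives x with phi x = y. The image of each prefix of x occurs, after
  some letter, inside the image of an expansion of some r in [0,1]. It therefore starts right
  after a block b or strictly inside it, and the prefix of x begins the expansion of frac (beta r)
  or of (a + frac (beta r)) / beta with a < b, both of which lie in [0,1).
\<close>

section \<open>The substitution on finite words\<close>

lemma phi_word_Nil [simp]: "phi_word [] = []"
  and phi_word_Cons [simp]: "phi_word (a # w) = replicate a 1 @ 0 # phi_word w"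
  and phi_word_append [simp]: "phi_word (u @ v) = phi_word u @ phi_word v"
  by (simp_all add: phi_word_def phi_sym_def)

lemma phi_word_replicate_0 [simp]: "phi_word (replicate k 0) = replicate k 0"
  by (induction k) simp_all

lemma set_phi_word: "set (phi_word w) \<subseteq> {0, 1}"
  by (induction w) auto

lemma length_le_length_phi_word: "length w \<le> length (phi_word w)"
  by (induction w) auto

lemma replicate_Cons_0_eq_iff:
  "replicate a (1::nat) @ 0 # v = replicate b 1 @ 0 # w \<longleftrightarrow> a = b \<and> v = w"
proof (induction a arbitrary: b)
  case 0
  then show ?case by (cases b) auto
next
  case (Suc a)
  then show ?case by (cases b) auto
qed

lemma phi_word_prefix_imp_prefix: "phi_word u @ s = phi_word w \<Longrightarrow> \<exists>v. w = u @ v"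
proof (induction u arbitrary: w)
  case Nil
  then show ?case by simp
next
  case (Cons a u)
  then obtain b w' where w: "w = b # w'"
    by (cases w) auto
  have "replicate a 1 @ 0 # (phi_word u @ s) = replicate b 1 @ 0 # phi_word w'"
    using Cons.prems by (simp add: w)
  then have "a = b" and "phi_word u @ s = phi_word w'"
    by (simp_all only: replicate_Cons_0_eq_iff)
  with Cons.IH show ?case
    by (auto simp: w)
qed

lemma phi_word_no_long_run:
  assumes "0 < n" and "\<forall>a \<in> set w. a < n"
  shows "phi_word w \<noteq> p @ replicate n 1 @ s"
  using assms(2)
proof (induction w arbitrary: p)
  case Nil
  then show ?case using assms(1) by simp
next
  case (Cons a w)
  show ?case
  proof
    assume eq: "phi_word (a # w) = p @ replicate n 1 @ s"
    show False
    proof (cases "length p \<le> a")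
      case True
      have "a - length p < n"
        using Cons.prems by auto
      then have "(p @ replicate n 1 @ s) ! a = 1"
        using True by (simp add: nth_append)
      moreover have "phi_word (a # w) ! a = 0"
        by (simp add: nth_append)
      ultimately show False
        using eq by simp
    next
      case False
      then have "phi_word w = drop (Suc a) p @ replicate n 1 @ s"
        using arg_cong[OF eq, of "drop (Suc a)"] by simp
      moreover have "\<forall>a \<in> set w. a < n"
        using Cons.prems by simp
      ultimately show False
        using Cons.IH by blast
    qed
  qed
qed

lemma phi_word_occurrence_after_letter:
  assumes "p @ c # phi_word u @ s = phi_word w"
  shows "\<exists>w1 b w2. w = w1 @ b # w2 \<and> ((\<exists>v. w2 = u @ v) \<or> (\<exists>a v. a < b \<and> a # w2 = u @ v))"
  using assms
proof (induction w arbitrary: p)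
  case Nil
  then show ?case by simp
next
  case (Cons b w)
  consider "Suc b \<le> length p" | "length p = b" | "length p < b"
    by linarith
  then show ?case
  proof cases
    case 1
    then have "drop (Suc b) p @ c # phi_word u @ s = phi_word w"
      using arg_cong[OF Cons.prems, of "drop (Suc b)"] by simp
    then obtain w1 b' w2 where "w = w1 @ b' # w2"
      "(\<exists>v. w2 = u @ v) \<or> (\<exists>a v. a < b' \<and> a # w2 = u @ v)"
      using Cons.IH by blast
    then show ?thesis
      by (intro exI[of _ "b # w1"]) auto
  next
    case 2
    then have "phi_word u @ s = phi_word w"
      using arg_cong[OF Cons.prems, of "drop (Suc b)"] by simp
    then obtain v where "w = u @ v"
      by (blast dest: phi_word_prefix_imp_prefix)
    then show ?thesis
      by (intro exI[of _ "[]"] exI[of _ b] exI[of _ w]) simp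
  next
    case 3
    then have "phi_word u @ s = phi_word ((b - Suc (length p)) # w)"
      using arg_cong[OF Cons.prems, of "drop (Suc (length p))"] by (simp add: Suc_diff_Suc)
    then obtain v where "(b - Suc (length p)) # w = u @ v"
      by (blast dest: phi_word_prefix_imp_prefix)
    moreover have "b - Suc (length p) < b"
      using 3 by simp
    ultimately show ?thesis
      by (intro exI[of _ "[]"] exI[of _ b] exI[of _ w]) auto
  qed
qed

section \<open>The substitution on one-sided sequences\<close>

lemma phi_seq_eq_conc: "phi_seq x = phi_sym (x 0) \<frown> phi_seq (suffix 1 x)"
proof
  fix p
  show "phi_seq x p = (phi_sym (x 0) \<frown> phi_seq (suffix 1 x)) p"
    by (subst phi_seq.simps) (auto simp: phi_sym_def nth_append conc_def suffix_def)
qed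

lemma prefix_Suc_build: "prefix (Suc k) (a ## x) = a # prefix k x"
  by (simp add: subsequence_def map_upt_Suc del: upt_Suc)

lemma prefix_Suc: "prefix (Suc k) x = x 0 # prefix k (suffix 1 x)"
  by (simp add: subsequence_def map_upt_Suc del: upt_Suc)

lemma phi_seq_eq_phi_word_conc: "phi_seq x = phi_word (prefix k x) \<frown> phi_seq (suffix k x)"
proof (induction k arbitrary: x)
  case 0
  then show ?case by simp
next
  case (Suc k)
  have "phi_seq x = phi_sym (x 0) \<frown> phi_word (prefix k (suffix 1 x)) \<frown> phi_seq (suffix k (suffix 1 x))"
    by (subst phi_seq_eq_conc, subst Suc.IH) (simp only: conc_conc)
  also have "\<dots> = phi_word (prefix (Suc k) x) \<frown> phi_seq (suffix (Suc k) x)"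
    unfolding prefix_Suc[of x k] suffix_suffix by (simp add: phi_sym_def)
  finally show ?case .
qed

lemma prefix_phi_seq_length_phi_word:
  "prefix (length (phi_word (prefix m x))) (phi_seq x) = phi_word (prefix m x)"
  by (subst phi_seq_eq_phi_word_conc[of x m]) (rule prefix_conc_length)

lemma phi_word_prefix_extends_prefix_phi_seq: "\<exists>s. phi_word (prefix m x) = prefix m (phi_seq x) @ s"
proof -
  have "m \<le> length (phi_word (prefix m x))"
    using length_le_length_phi_word[of "prefix m x"] by simp
  then have "prefix m (phi_seq x) = take m (phi_word (prefix m x))"
    by (subst phi_seq_eq_phi_word_conc[of x m]) (rule prefix_conc_fst)
  then show ?thesis
    by (metis append_take_drop_id)
qed

lemma lex_le_conc: "lex_le v w \<Longrightarrow> lex_le (u \<frown> v) (u \<frown> w)"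
proof (unfold lex_le_def, elim disjE exE conjE)
  fix k assume eq: "\<forall>i<k. v i = w i" and less: "v k < w k"
  have "\<forall>i < length u + k. (u \<frown> v) i = (u \<frown> w) i"
    using eq by (auto simp: conc_def)
  moreover have "(u \<frown> v) (length u + k) < (u \<frown> w) (length u + k)"
    using less by (simp add: conc_def)
  ultimately show "u \<frown> v = u \<frown> w \<or> (\<exists>k. (\<forall>i<k. (u \<frown> v) i = (u \<frown> w) i) \<and> (u \<frown> v) k < (u \<frown> w) k)"
    by blast
qed simp

lemma lex_le_phi_seq_of_less:
  assumes "x 0 < y 0"
  shows "lex_le (phi_seq x) (phi_seq y)"
proof -
  have phi_seq_init: "phi_seq z i = phi_sym (z 0) ! i" if "i \<le> z 0" for z i
    using that by (subst phi_seq_eq_conc, intro conc_fst) (simp add: phi_sym_def)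
  have "\<forall>i < x 0. phi_seq x i = phi_seq y i"
    using assms by (simp add: phi_seq_init phi_sym_def nth_append)
  moreover have "phi_seq x (x 0) < phi_seq y (x 0)"
    using assms by (simp add: phi_seq_init phi_sym_def nth_append)
  ultimately show ?thesis
    unfolding lex_le_def by (intro disjI2 exI[of _ "x 0"]) simp
qed

lemma phi_seq_lex_mono: "lex_le x y \<Longrightarrow> lex_le (phi_seq x) (phi_seq y)"
proof (unfold lex_le_def[of x y], elim disjE exE conjE)
  fix k assume eq: "\<forall>i<k. x i = y i" and less: "x k < y k"
  have "prefix k x = prefix k y"
    using eq by (simp add: subsequence_def)
  moreover have "lex_le (phi_seq (suffix k x)) (phi_seq (suffix k y))"
    using less by (intro lex_le_phi_seq_of_less) simp
  ultimately have "lex_le (phi_word (prefix k x) \<frown> phi_seq (suffix k x))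
      (phi_word (prefix k y) \<frown> phi_seq (suffix k y))"
    by (simp only: lex_le_conc)
  then show ?thesis
    by (simp only: phi_seq_eq_phi_word_conc[symmetric])
qed (simp add: lex_le_def)

definition first_zero :: "nat word \<Rightarrow> nat" where
  "first_zero y = (LEAST k. y k = 0)"

text \<open>Cutting y after each of its zeros, block_lengths y k is the number of ones in the k-th piece.\<close>
definition block_lengths :: "nat word \<Rightarrow> nat word" where
  "block_lengths y k = first_zero (((\<lambda>z. suffix (Suc (first_zero z)) z) ^^ k) y)"

lemma binary_eq_phi_sym_conc:
  assumes "\<forall>k. y k \<le> 1" and "y k = 0"
  shows "y = phi_sym (first_zero y) \<frown> suffix (Suc (first_zero y)) y"
proof -
  have zero: "y (first_zero y) = 0"
    unfolding first_zero_def using assms(2) by (rule LeastI)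
  have ones: "y i = 1" if "i < first_zero y" for i
  proof -
    have "y i \<noteq> 0"
      using that unfolding first_zero_def by (rule not_less_Least)
    then show ?thesis
      using assms(1) by (metis le_neq_implies_less less_one)
  qed
  show ?thesis
  proof
    fix i
    consider "i < first_zero y" | "i = first_zero y" | "first_zero y < i"
      by linarith
    then show "y i = (phi_sym (first_zero y) \<frown> suffix (Suc (first_zero y)) y) i"
      by cases (simp_all add: ones zero phi_sym_def nth_append conc_def)
  qed
qed

lemma block_lengths_0: "block_lengths y 0 = first_zero y"
  by (simp add: block_lengths_def)

lemma suffix_block_lengths: "suffix 1 (block_lengths y) = block_lengths (suffix (Suc (first_zero y)) y)"
  by (simp add: fun_eq_iff block_lengths_def funpow_Suc_right del: funpow.simps)

lemma phi_seq_block_lengths: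
  assumes "\<forall>k. y k \<le> 1" and "\<forall>i. \<exists>k\<ge>i. y k = 0"
  shows "phi_seq (block_lengths y) = y"
proof
  fix p
  show "phi_seq (block_lengths y) p = y p"
    using assms
  proof (induction p arbitrary: y rule: less_induct)
    case (less p y)
    define z where "z = suffix (Suc (first_zero y)) y"
    obtain k where "y k = 0"
      using less.prems(2) by auto
    then have y: "y = phi_sym (first_zero y) \<frown> z"
      unfolding z_def by (rule binary_eq_phi_sym_conc[OF less.prems(1)])
    define l where "l = length (phi_sym (first_zero y))"
    have z_binary: "\<forall>k. z k \<le> 1"
      using less.prems(1) by (simp add: z_def)
    have z_zeros: "\<exists>k\<ge>i. z k = 0" for i
    proof -
      obtain k where "k \<ge> Suc (first_zero y) + i" "y k = 0"
        using less.prems(2) by auto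
      then show ?thesis
        by (intro exI[of _ "k - Suc (first_zero y)"]) (simp add: z_def)
    qed
    have IH: "phi_seq (block_lengths z) (p - l) = z (p - l)" if "l \<le> p"
      using that z_binary z_zeros by (intro less.IH) (auto simp: l_def phi_sym_def)
    have "phi_seq (block_lengths y) = phi_sym (first_zero y) \<frown> phi_seq (block_lengths z)"
      by (subst phi_seq_eq_conc) (simp only: block_lengths_0 suffix_block_lengths z_def)
    then have "phi_seq (block_lengths y) p = (phi_sym (first_zero y) \<frown> z) p"
      using IH by (simp add: conc_def l_def)
    also have "\<dots> = y p"
      by (rule fun_cong[OF y, symmetric])
    finally show ?case .
  qed
qed

section \<open>Right-rays of shift spaces\<close>

lemma map_upto_eq_map_upt: "map f [i..j] = map (\<lambda>k. f (i + int k)) [0..<nat (j - i + 1)]"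
  by (rule nth_equalityI) auto

lemma right_rays_shift_of_langD:
  assumes "x \<in> right_rays (shift_of_lang L)"
  obtains c where "c # prefix m x \<in> L"
proof -
  obtain z where z: "z \<in> shift_of_lang L" and x: "x = (\<lambda>k. z (int k))"
    using assms unfolding right_rays_def by blast
  have "map z [-1..int m - 1] \<in> L"
    using z unfolding shift_of_lang_def by simp
  moreover have "map z [-1..int m - 1] = z (-1) # prefix m x"
  proof -
    have "nat (int m - 1 - (-1) + 1) = Suc m"
      by simp
    then show ?thesis
      unfolding map_upto_eq_map_upt x subsequence_def by (simp add: map_upt_Suc del: upt_Suc)
  qed
  ultimately show ?thesis
    using that by metis
qed

lemma map_upto_zero_padding:
  fixes x :: "nat word"
  assumes "i \<le> j" and "0 \<le> j"
  shows "map (\<lambda>q. if q < 0 then 0 else x (nat q)) [i..j]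
    = drop (nat i) (replicate (nat (- i)) 0 @ prefix (nat (j + 1)) x)"
    (is "map ?z [i..j] = _")
proof (rule nth_equalityI)
  show "length (map ?z [i..j]) = length (drop (nat i) (replicate (nat (- i)) 0 @ prefix (nat (j + 1)) x))"
    using assms by (cases "0 \<le> i") (simp_all add: nat_diff_distrib' nat_add_distrib)
  fix l assume "l < length (map ?z [i..j])"
  then have l: "l < nat (j - i + 1)"
    by simp
  show "map ?z [i..j] ! l = drop (nat i) (replicate (nat (- i)) 0 @ prefix (nat (j + 1)) x) ! l"
  proof (cases "i + int l < 0")
    case True
    then have "nat i = 0" "l < nat (- i)"
      by linarith+
    then show ?thesis
      using True l by (simp add: nth_append)
  next
    case False
    then have "\<not> nat i + l < nat (- i)" "nat i + l - nat (- i) = nat (i + int l)"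
        "nat (i + int l) < nat (j + 1)" "nat i + l \<le> nat (- i) + nat (j + 1)"
      using l assms by linarith+
    then show ?thesis
      using False l by (simp add: nth_append del: drop_append)
  qed
qed

text \<open>The two-sided witness is the ray padded with zeros to the left.\<close>
lemma right_rays_shift_of_langI:
  assumes "\<And>k m i. i < k + m \<Longrightarrow> drop i (replicate k 0 @ prefix m x) \<in> L"
  shows "x \<in> right_rays (shift_of_lang L)"
proof -
  define z where "z q = (if q < 0 then 0 else x (nat q))" for q :: int
  have "map z [i..j] \<in> L" if "i \<le> j" for i j
  proof (cases "j < 0")
    case True
    then have "map z [i..j] = drop 0 (replicate (nat (j - i + 1)) 0 @ prefix 0 x)"
      by (intro nth_equalityI) (auto simp: z_def)
    then show ?thesis
      using assms[of 0 "nat (j - i + 1)" 0] that by simp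
  next
    case False
    then have "map z [i..j] = drop (nat i) (replicate (nat (- i)) 0 @ prefix (nat (j + 1)) x)"
      unfolding z_def using that by (intro map_upto_zero_padding) simp_all
    moreover have "nat i < nat (- i) + nat (j + 1)"
      using that False by linarith
    ultimately show ?thesis
      using assms by simp
  qed
  then have "z \<in> shift_of_lang L"
    unfolding shift_of_lang_def by blast
  moreover have "x = (\<lambda>k. z (int k))"
    by (simp add: z_def)
  ultimately show ?thesis
    unfolding right_rays_def by blast
qed

section \<open>Beta-expansions\<close>

definition beta_prefixes :: "real \<Rightarrow> nat list set" where
  "beta_prefixes \<beta> = {prefix m (beta_digit \<beta> t) | t m. 0 \<le> t \<and> t < 1}"

lemma beta_rem_add: "beta_rem \<beta> t (i + j) = beta_rem \<beta> (beta_rem \<beta> t i) j"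
  by (induction j) simp_all

lemma suffix_beta_digit: "suffix i (beta_digit \<beta> t) = beta_digit \<beta> (beta_rem \<beta> t i)"
  by (simp add: fun_eq_iff beta_digit_def beta_rem_add)

lemma beta_rem_Suc_bounds: "0 \<le> beta_rem \<beta> t (Suc i)" "beta_rem \<beta> t (Suc i) < 1"
  by (simp_all add: frac_lt_1)

lemma beta_rem_bounds: "0 \<le> t \<Longrightarrow> t \<le> 1 \<Longrightarrow> 0 \<le> beta_rem \<beta> t i \<and> beta_rem \<beta> t i \<le> 1"
  by (cases i) (auto simp: less_imp_le[OF frac_lt_1])

lemma beta_lang_eq: "beta_lang \<beta> = {prefix m (beta_digit \<beta> r) | r m. 0 \<le> r \<and> r \<le> 1 \<and> 0 < m}"
proof (intro equalityI subsetI)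
  fix w assume "w \<in> beta_lang \<beta>"
  then obtain t i j where t: "0 \<le> t" "t \<le> 1" "i < j" and w: "w = map (beta_digit \<beta> t) [i..<j]"
    unfolding beta_lang_def by blast
  have "w = prefix (j - i) (beta_digit \<beta> (beta_rem \<beta> t i))"
    unfolding w suffix_beta_digit[symmetric] subsequence_prefix_suffix by (simp add: subsequence_def)
  moreover have "0 < j - i"
    using t(3) by simp
  ultimately show "w \<in> {prefix m (beta_digit \<beta> r) | r m. 0 \<le> r \<and> r \<le> 1 \<and> 0 < m}"
    using beta_rem_bounds[OF t(1,2)] by blast
next
  fix w assume "w \<in> {prefix m (beta_digit \<beta> r) | r m. 0 \<le> r \<and> r \<le> 1 \<and> 0 < m}"
  then obtain r m where "0 \<le> r" "r \<le> 1" "0 < m" "w = map (beta_digit \<beta> r) [0..<m]"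
    unfolding subsequence_def by blast
  then show "w \<in> beta_lang \<beta>"
    unfolding beta_lang_def by blast
qed

lemma beta_prefixes_append_left: "u @ v \<in> beta_prefixes \<beta> \<Longrightarrow> u \<in> beta_prefixes \<beta>"
proof -
  assume "u @ v \<in> beta_prefixes \<beta>"
  then obtain t m where t: "0 \<le> t" "t < 1" and uv: "u @ v = prefix m (beta_digit \<beta> t)"
    unfolding beta_prefixes_def by blast
  have "u = prefix (length u) (beta_digit \<beta> t)"
    using arg_cong[OF uv, of "take (length u)"] arg_cong[OF uv, of length] by simp
  with t show ?thesis
    unfolding beta_prefixes_def by blast
qed

lemma drop_beta_prefixes_in_beta_lang:
  "w \<in> beta_prefixes \<beta> \<Longrightarrow> i < length w \<Longrightarrow> drop i w \<in> beta_lang \<beta>"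
proof -
  assume "w \<in> beta_prefixes \<beta>" and i: "i < length w"
  then obtain t m where "0 \<le> t" "t < 1" "w = map (beta_digit \<beta> t) [0..<m]"
    unfolding beta_prefixes_def subsequence_def by blast
  moreover have "drop i (map (beta_digit \<beta> t) [0..<m]) = map (beta_digit \<beta> t) [i..<m]"
    by (simp add: drop_map)
  ultimately show ?thesis
    using i unfolding beta_lang_def by fastforce
qed

lemma beta_digit_less:
  assumes "0 \<le> \<beta>" "\<beta> < real n" "0 \<le> r" "r \<le> 1"
  shows "beta_digit \<beta> r k < n"
proof -
  have "0 \<le> \<beta> * beta_rem \<beta> r k" "\<beta> * beta_rem \<beta> r k \<le> \<beta>"
    using beta_rem_bounds[OF assms(3,4), of \<beta> k] assms(1) by (simp_all add: mult_left_le)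
  then show ?thesis
    using assms(2) unfolding beta_digit_def by linarith
qed

context
  fixes \<beta> :: real
  assumes beta_gt_1: "1 < \<beta>"
begin

lemma beta_digit_divide:
  assumes "0 \<le> s" "s < 1"
  shows "beta_digit \<beta> ((real c + s) / \<beta>) = c ## beta_digit \<beta> s"
proof
  fix k
  have mult: "\<beta> * ((real c + s) / \<beta>) = real c + s"
    using beta_gt_1 by simp
  have floor: "\<lfloor>real c + s\<rfloor> = int c"
    using assms by (intro floor_unique) auto
  show "beta_digit \<beta> ((real c + s) / \<beta>) k = (c ## beta_digit \<beta> s) k"
  proof (cases k)
    case 0
    then show ?thesis
      by (simp add: beta_digit_def mult floor del: times_divide_eq_right)
  next
    case (Suc k')
    have "beta_rem \<beta> ((real c + s) / \<beta>) 1 = s"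
      by (simp add: mult frac_def floor del: times_divide_eq_right)
    then show ?thesis
      using fun_cong[OF suffix_beta_digit[of 1 \<beta> "(real c + s) / \<beta>"], of k'] Suc by simp
  qed
qed

lemma replicate_0_append_beta_prefixes:
  "w \<in> beta_prefixes \<beta> \<Longrightarrow> replicate k 0 @ w \<in> beta_prefixes \<beta>"
proof (induction k)
  case 0
  then show ?case by simp
next
  case (Suc k)
  then obtain t m where t: "0 \<le> t" "t < 1" and w: "replicate k 0 @ w = prefix m (beta_digit \<beta> t)"
    unfolding beta_prefixes_def by blast
  have "beta_digit \<beta> (t / \<beta>) = 0 ## beta_digit \<beta> t"
    using beta_digit_divide[OF t, of 0] by simp
  then have "replicate (Suc k) 0 @ w = prefix (Suc m) (beta_digit \<beta> (t / \<beta>))"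
    using w by (simp add: prefix_Suc_build)
  moreover have "0 \<le> t / \<beta>" "t / \<beta> < 1"
    using t beta_gt_1 by simp_all
  ultimately show ?case
    unfolding beta_prefixes_def by blast
qed

text \<open>Cutting the first letter b off an expansion of r leaves an expansion of frac (\<beta> r);
  replacing b by a smaller digit a gives an expansion of (a + frac (\<beta> r)) / \<beta> < r \<le> 1.\<close>
lemma beta_prefixes_Cons:
  assumes "0 \<le> r" "r \<le> 1" and bw: "b # w = prefix (Suc m) (beta_digit \<beta> r)"
  shows "w \<in> beta_prefixes \<beta>" and "a < b \<Longrightarrow> a # w \<in> beta_prefixes \<beta>"
proof -
  define r' where "r' = beta_rem \<beta> r 1"
  have r': "0 \<le> r'" "r' < 1"
    using beta_rem_Suc_bounds unfolding r'_def One_nat_def by blast+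
  have b: "b = beta_digit \<beta> r 0" and w: "w = prefix m (beta_digit \<beta> r')"
    using bw unfolding prefix_Suc r'_def suffix_beta_digit by simp_all
  show "w \<in> beta_prefixes \<beta>"
    using r' w unfolding beta_prefixes_def by blast
  assume "a < b"
  have "\<beta> * r = real b + r'"
    using \<open>0 \<le> r\<close> beta_gt_1 by (simp add: b r'_def beta_digit_def frac_def)
  moreover have "\<beta> * r \<le> \<beta>"
    using assms(1,2) beta_gt_1 by (simp add: mult_left_le)
  ultimately have "(real a + r') / \<beta> < 1"
    using \<open>a < b\<close> beta_gt_1 by (simp add: divide_less_eq)
  moreover have "0 \<le> (real a + r') / \<beta>"
    using r' beta_gt_1 by simp
  moreover have "a # w = prefix (Suc m) (beta_digit \<beta> ((real a + r') / \<beta>))"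
    using w by (simp add: beta_digit_divide[OF r'] prefix_Suc_build)
  ultimately show "a # w \<in> beta_prefixes \<beta>"
    unfolding beta_prefixes_def by blast
qed

end

section \<open>The beta-shift and its image\<close>

lemma right_rays_phi_shift_prefixE:
  assumes "y \<in> right_rays (shift_of_lang (phi_lang (beta_lang \<beta>)))"
  obtains r m' p c s where "0 \<le> r" "r \<le> 1"
    and "p @ c # prefix m y @ s = phi_word (prefix m' (beta_digit \<beta> r))"
proof -
  obtain c where "c # prefix m y \<in> phi_lang (beta_lang \<beta>)"
    using assms by (rule right_rays_shift_of_langD)
  then obtain w p s where "w \<in> beta_lang \<beta>" and w: "phi_word w = p @ c # prefix m y @ s"
    unfolding phi_lang_def by auto
  then obtain r m' where "0 \<le> r" "r \<le> 1" "w = prefix m' (beta_digit \<beta> r)"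
    unfolding beta_lang_eq by blast
  with w show ?thesis
    using that by metis
qed

lemma right_rays_phi_shift_binary:
  assumes "y \<in> right_rays (shift_of_lang (phi_lang (beta_lang \<beta>)))"
  shows "y k \<le> 1"
proof -
  obtain r m' p c s where eq: "p @ c # prefix (Suc k) y @ s = phi_word (prefix m' (beta_digit \<beta> r))"
    using assms by (rule right_rays_phi_shift_prefixE)
  have "y k \<in> set (p @ c # prefix (Suc k) y @ s)"
    by simp
  then have "y k \<in> set (phi_word (prefix m' (beta_digit \<beta> r)))"
    by (simp only: eq)
  then show ?thesis
    using set_phi_word by fastforce
qed

lemma right_rays_phi_shift_zeros:
  assumes "0 \<le> \<beta>" "\<beta> < real n" and y: "y \<in> right_rays (shift_of_lang (phi_lang (beta_lang \<beta>)))"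
  shows "\<exists>k\<ge>i. y k = 0"
proof (rule ccontr)
  assume "\<not> (\<exists>k\<ge>i. y k = 0)"
  then have nonzero: "y (i + k) \<noteq> 0" for k
    by simp
  have "y (i + k) = 1" for k
    using nonzero[of k] right_rays_phi_shift_binary[OF y, of "i + k"] by linarith
  then have "y [i \<rightarrow> i + n] = replicate n 1"
    by (intro nth_equalityI) simp_all
  then have run: "prefix (i + n) y = prefix i y @ replicate n 1"
    by (simp add: subsequence_append)
  obtain r m' p c s where r: "0 \<le> r" "r \<le> 1"
    and "p @ c # prefix (i + n) y @ s = phi_word (prefix m' (beta_digit \<beta> r))"
    using y by (rule right_rays_phi_shift_prefixE)
  then have "phi_word (prefix m' (beta_digit \<beta> r)) = (p @ c # prefix i y) @ replicate n 1 @ s"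
    by (simp add: run)
  moreover have "\<forall>a \<in> set (prefix m' (beta_digit \<beta> r)). a < n"
    using beta_digit_less[OF assms(1,2) r] by auto
  moreover have "0 < n"
    using assms(1,2) by simp
  ultimately show False
    using phi_word_no_long_run by blast
qed

context
  fixes \<beta> :: real
  assumes beta_gt_1: "1 < \<beta>"
begin

lemma right_rays_beta_shift_iff:
  "x \<in> right_rays (beta_shift \<beta>) \<longleftrightarrow> (\<forall>m. prefix m x \<in> beta_prefixes \<beta>)"
proof
  assume x: "x \<in> right_rays (beta_shift \<beta>)"
  show "\<forall>m. prefix m x \<in> beta_prefixes \<beta>"
  proof
    fix m
    obtain c where "c # prefix m x \<in> beta_lang \<beta>"
      using x unfolding beta_shift_def by (rule right_rays_shift_of_langD)
    then obtain r m' where "0 \<le> r" "r \<le> 1" and cx: "c # prefix m x = prefix m' (beta_digit \<beta> r)"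
      unfolding beta_lang_eq by blast
    moreover have "m' = Suc m"
      using arg_cong[OF cx, of length] by simp
    ultimately show "prefix m x \<in> beta_prefixes \<beta>"
      by (blast intro: beta_prefixes_Cons(1)[OF beta_gt_1])
  qed
next
  assume "\<forall>m. prefix m x \<in> beta_prefixes \<beta>"
  then have "drop i (replicate k 0 @ prefix m x) \<in> beta_lang \<beta>" if "i < k + m" for k m i
    using that by (intro drop_beta_prefixes_in_beta_lang replicate_0_append_beta_prefixes[OF beta_gt_1]) auto
  then show "x \<in> right_rays (beta_shift \<beta>)"
    unfolding beta_shift_def by (rule right_rays_shift_of_langI)
qed

text \<open>The letter c in front of phi u is what keeps the number whose expansion begins with u
  below 1.\<close>
lemma beta_prefixes_of_phi_word_occurrence:
  assumes "0 \<le> r" "r \<le> 1" and occ: "p @ c # phi_word u @ s = phi_word (prefix m (beta_digit \<beta> r))"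
  shows "u \<in> beta_prefixes \<beta>"
proof -
  obtain w1 b w2 where split: "prefix m (beta_digit \<beta> r) = w1 @ b # w2"
    and u: "(\<exists>v. w2 = u @ v) \<or> (\<exists>a v. a < b \<and> a # w2 = u @ v)"
    using phi_word_occurrence_after_letter[OF occ] by blast
  define i where "i = length w1"
  have m: "m = i + Suc (length w2)"
    using arg_cong[OF split, of length] by (simp add: i_def)
  have "b # w2 = drop i (prefix m (beta_digit \<beta> r))"
    by (simp add: split i_def)
  also have "\<dots> = prefix (Suc (length w2)) (beta_digit \<beta> (beta_rem \<beta> r i))"
    by (simp add: m suffix_beta_digit[symmetric])
  finally have bw: "b # w2 = prefix (Suc (length w2)) (beta_digit \<beta> (beta_rem \<beta> r i))" .
  have "0 \<le> beta_rem \<beta> r i" "beta_rem \<beta> r i \<le> 1"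
    using beta_rem_bounds[OF assms(1,2)] by blast+
  note tail_prefixes = beta_prefixes_Cons[OF beta_gt_1 this bw]
  from u show ?thesis
    by (metis tail_prefixes beta_prefixes_append_left)
qed

lemma phi_seq_in_right_rays:
  assumes "x \<in> right_rays (beta_shift \<beta>)"
  shows "phi_seq x \<in> right_rays (shift_of_lang (phi_lang (beta_lang \<beta>)))"
proof (rule right_rays_shift_of_langI)
  fix k m i :: nat assume i: "i < k + m"
  define w where "w = replicate k 0 @ prefix m x"
  define v where "v = replicate k 0 @ prefix m (phi_seq x)"
  have "w \<in> beta_prefixes \<beta>"
    using assms unfolding w_def right_rays_beta_shift_iff by (blast intro: replicate_0_append_beta_prefixes[OF beta_gt_1])
  then have "drop 0 w \<in> beta_lang \<beta>"
    using i by (intro drop_beta_prefixes_in_beta_lang) (auto simp: w_def)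
  moreover obtain s where "phi_word (prefix m x) = prefix m (phi_seq x) @ s"
    using phi_word_prefix_extends_prefix_phi_seq by blast
  then have "phi_word w = v @ s"
    by (simp add: w_def v_def)
  then have "phi_word w = take i v @ drop i v @ s"
    by (metis append_take_drop_id append_assoc)
  ultimately show "drop i v \<in> phi_lang (beta_lang \<beta>)"
    unfolding phi_lang_def by auto
qed

lemma right_rays_phi_shift_subset_image:
  assumes "\<beta> < real n" and y: "y \<in> right_rays (shift_of_lang (phi_lang (beta_lang \<beta>)))"
  shows "y \<in> phi_seq ` right_rays (beta_shift \<beta>)"
proof -
  define x where "x = block_lengths y"
  have phi_x: "phi_seq x = y"
    unfolding x_def using beta_gt_1 assms
    by (intro phi_seq_block_lengths allI right_rays_phi_shift_binary right_rays_phi_shift_zeros) auto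
  have "prefix m x \<in> beta_prefixes \<beta>" for m
  proof -
    obtain r m' p c s where "0 \<le> r" "r \<le> 1"
      and "p @ c # prefix (length (phi_word (prefix m x))) y @ s = phi_word (prefix m' (beta_digit \<beta> r))"
      using y by (rule right_rays_phi_shift_prefixE)
    then show ?thesis
      unfolding phi_x[symmetric] prefix_phi_seq_length_phi_word
      by (rule beta_prefixes_of_phi_word_occurrence)
  qed
  then have "x \<in> right_rays (beta_shift \<beta>)"
    by (simp add: right_rays_beta_shift_iff)
  with phi_x show ?thesis
    by blast
qed

end

text \<open>The lower bound real n - 1 < \<beta> only makes n the least integer above \<beta>;
  the argument uses just \<beta> < real n.\<close>
theorem lemma4p4:
  fixes n :: nat and \<beta> :: real
  assumes "1 < \<beta>" and "real n - 1 < \<beta>" and "\<beta> < real n"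
  shows "phi_seq ` right_rays (beta_shift \<beta>)
           = right_rays (shift_of_lang (phi_lang (beta_lang \<beta>)))
       \<and> (\<forall>x \<in> right_rays (beta_shift \<beta>). \<forall>y \<in> right_rays (beta_shift \<beta>).
            lex_le x y \<longrightarrow> lex_le (phi_seq x) (phi_seq y))"
  using phi_seq_in_right_rays[OF assms(1)] right_rays_phi_shift_subset_image[OF assms(1,3)]
    phi_seq_lex_mono
  by blast

end
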